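(* For every nonempty graph $G$, \[\hat r(\nu(G)K_2,G)\le \hat r(G,G),\qquad\text{and consequently}\qquad \hat r_\infty(G)\le \frac{\hat r(G,G)}{\nu(G)\,|E(G)|}.\]
   Context: All graphs are finite and simple; a graph is nonempty if it has at least one edge. $\nu(G)$ is the maximum size of a matching in $G$; $tK_2$ is a matching with $t$ edges. For graphs $F,G,H$, $F\to(G,H)$ means every red--blue coloring of $E(F)$ contains a red copy of $G$ or a blue copy of $H$, and $\hat r(G,H)=\min\{|E(F)|:F\to(G,H)\}$. For a nonempty graph $G$, $\hat r_\infty(G)=\lim_{t\to\infty}\frac{\hat r(tK_2,G)}{t\,|E(G)|}$ (this limit exists). *)

theory Defs
  imports Complex_Main
begin

type_synonym 'a graph = "'a set \<times> 'a set set"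

definition verts :: "'a graph \<Rightarrow> 'a set" where "verts G = fst G"
definition edges :: "'a graph \<Rightarrow> 'a set set" where "edges G = snd G"

definition is_graph :: "'a graph \<Rightarrow> bool" where
  "is_graph G \<longleftrightarrow> finite (verts G) \<and>
     (\<forall>e\<in>edges G. \<exists>u v. u \<in> verts G \<and> v \<in> verts G \<and> u \<noteq> v \<and> e = {u, v})"

definition contains_copy :: "'b graph \<Rightarrow> 'a graph \<Rightarrow> bool" where
  "contains_copy F H \<longleftrightarrow> (\<exists>f. inj_on f (verts H) \<and> f ` verts H \<subseteq> verts F \<and>
     (\<forall>e\<in>edges H. f ` e \<in> edges F))"

text \<open>F \<rightarrow> (G, H): every red/blue colouring (red edge set R) of E(F) contains a red
  copy of G or a blue copy of H.\<close>
definition arrows :: "'c graph \<Rightarrow> 'a graph \<Rightarrow> 'b graph \<Rightarrow> bool" where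
  "arrows F G H \<longleftrightarrow> (\<forall>R \<subseteq> edges F.
      contains_copy (verts F, R) G \<or> contains_copy (verts F, edges F - R) H)"

text \<open>Size Ramsey number; host graphs are taken on natural-number vertices
  (no loss of generality, since host graphs are finite).\<close>
definition size_ramsey :: "'a graph \<Rightarrow> 'b graph \<Rightarrow> nat" where
  "size_ramsey G H = (LEAST m. \<exists>F :: nat graph. is_graph F \<and> card (edges F) = m \<and> arrows F G H)"

definition matching_graph :: "nat \<Rightarrow> nat graph" where
  "matching_graph t = ({..<2*t}, {{2*i, 2*i+1} | i. i < t})"

definition is_matching :: "'a graph \<Rightarrow> 'a set set \<Rightarrow> bool" where
  "is_matching G M \<longleftrightarrow> M \<subseteq> edges G \<and> (\<forall>e\<in>M. \<forall>e'\<in>M. e \<noteq> e' \<longrightarrow> e \<inter> e' = {})"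

definition matching_number :: "'a graph \<Rightarrow> nat" where
  "matching_number G = Max (card ` {M. is_matching G M})"

definition size_ramsey_infty :: "'a graph \<Rightarrow> real" where
  "size_ramsey_infty G =
     lim (\<lambda>t. real (size_ramsey (matching_graph t) G) / (real t * real (card (edges G))))"

end

theory Submission
  imports Defs "HOL-Library.Ramsey"
begin

(* Since G contains a matching with nu(G) edges, any graph F with F -> (G, G) also satisfies
   F -> (nu(G) K_2, G).  The size Ramsey number of t K_2 versus G is subadditive in t: colour the
   disjoint union of a graph arrowing (a K_2, G) and one arrowing (b K_2, G); unless one part has a
   blue G, the red matchings of the two parts together form a red (a + b) K_2.  Hence
   rhat(k nu K_2, G) <= k rhat(G, G), and computing the limit along the subsequence t = k nu
   bounds rhat_infty(G). *)

lemma nsets_disjoint: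
  assumes "A \<inter> B = {}" and "0 < k"
  shows "[A]\<^bsup>k\<^esup> \<inter> [B]\<^bsup>k\<^esup> = {}"
proof -
  have False if "e \<in> [A]\<^bsup>k\<^esup>" "e \<in> [B]\<^bsup>k\<^esup>" for e
  proof -
    have "e \<subseteq> A \<inter> B" "card e = k" using that by (auto simp: nsets_def)
    then show False using assms by simp
  qed
  then show ?thesis by auto
qed

lemma nsets_2_endpoints:
  assumes "M \<subseteq> [V]\<^bsup>2\<^esup>"
  shows "\<exists>a b. \<forall>e\<in>M. a e \<in> V \<and> b e \<in> V \<and> a e \<noteq> b e \<and> {a e, b e} = e"
proof -
  have "\<forall>e\<in>M. \<exists>a b. a \<in> V \<and> b \<in> V \<and> a \<noteq> b \<and> {a, b} = e"
    using assms by (metis nsets2_E subsetD)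
  then show ?thesis by metis
qed

lemma inj_on_interleave:
  fixes n :: nat
  assumes "\<And>i j. i < n \<Longrightarrow> j < n \<Longrightarrow> i \<noteq> j \<Longrightarrow> {x i, y i} \<inter> {x j, y j} = {}"
    and "\<And>i. i < n \<Longrightarrow> x i \<noteq> y i"
  shows "inj_on (\<lambda>k. if even k then x (k div 2) else y (k div 2)) {..<2 * n}"
proof (rule inj_onI)
  fix j k assume j: "j \<in> {..<2 * n}" and k: "k \<in> {..<2 * n}"
    and eq: "(if even j then x (j div 2) else y (j div 2)) = (if even k then x (k div 2) else y (k div 2))"
  have "j div 2 < n" "k div 2 < n" using j k by auto
  have "j div 2 = k div 2"
  proof (rule ccontr)
    assume "j div 2 \<noteq> k div 2"
    then have "{x (j div 2), y (j div 2)} \<inter> {x (k div 2), y (k div 2)} = {}"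
      using assms(1) \<open>j div 2 < n\<close> \<open>k div 2 < n\<close> by blast
    then show False using eq by (auto split: if_splits)
  qed
  moreover have "even j \<longleftrightarrow> even k"
    using eq \<open>j div 2 = k div 2\<close> assms(2)[OF \<open>j div 2 < n\<close>] by (auto split: if_splits)
  ultimately show "j = k" by presburger
qed

lemma lim_le_of_subseq_le:
  fixes X :: "nat \<Rightarrow> real" and r :: "nat \<Rightarrow> nat"
  assumes "convergent X" and "strict_mono r" and "\<And>k. X (r k) \<le> c"
  shows "lim X \<le> c"
proof -
  have "(X \<circ> r) \<longlonglongrightarrow> lim X"
    using assms(1,2) by (simp add: LIMSEQ_subseq_LIMSEQ convergent_LIMSEQ_iff)
  then show ?thesis using assms(3) by (simp add: LIMSEQ_le_const2)
qed

lemma verts_pair [simp]: "verts (V, E) = V"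
  by (simp add: verts_def)

lemma edges_pair [simp]: "edges (V, E) = E"
  by (simp add: edges_def)

lemma is_graph_iff_nsets: "is_graph G \<longleftrightarrow> finite (verts G) \<and> edges G \<subseteq> [verts G]\<^bsup>2\<^esup>"
proof
  show "is_graph G \<Longrightarrow> finite (verts G) \<and> edges G \<subseteq> [verts G]\<^bsup>2\<^esup>"
    unfolding is_graph_def by auto
  show "finite (verts G) \<and> edges G \<subseteq> [verts G]\<^bsup>2\<^esup> \<Longrightarrow> is_graph G"
    unfolding is_graph_def by (metis nsets2_E subsetD)
qed

lemma is_graph_finite_verts: "is_graph G \<Longrightarrow> finite (verts G)"
  by (simp add: is_graph_def)

lemma is_graph_finite_edges:
  assumes "is_graph G"
  shows "finite (edges G)"
  using assms finite_imp_finite_nsets finite_subset unfolding is_graph_iff_nsets by blast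

lemma contains_copy_trans:
  assumes "contains_copy A B" and "contains_copy B C"
  shows "contains_copy A C"
proof -
  obtain f where f: "inj_on f (verts B)" "f ` verts B \<subseteq> verts A" "\<forall>e\<in>edges B. f ` e \<in> edges A"
    using assms(1) unfolding contains_copy_def by blast
  obtain g where g: "inj_on g (verts C)" "g ` verts C \<subseteq> verts B" "\<forall>e\<in>edges C. g ` e \<in> edges B"
    using assms(2) unfolding contains_copy_def by blast
  have "inj_on (f \<circ> g) (verts C)" using f(1) g(1,2) by (simp add: comp_inj_on inj_on_subset)
  moreover have "(f \<circ> g) ` verts C \<subseteq> verts A" using f(2) g(2) by (auto simp: image_subset_iff)
  moreover have "(f \<circ> g) ` e \<in> edges A" if "e \<in> edges C" for e
  proof -
    have "f ` g ` e \<in> edges A" using f(3) g(3) that by blast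
    then show ?thesis by (simp add: image_comp)
  qed
  ultimately show ?thesis unfolding contains_copy_def by (intro exI[of _ "f \<circ> g"]) blast
qed

lemma contains_copy_mono:
  assumes "contains_copy (V, E) H" and "V \<subseteq> V'" and "E \<subseteq> E'"
  shows "contains_copy (V', E') H"
proof -
  obtain f where "inj_on f (verts H)" "f ` verts H \<subseteq> V" "\<forall>e\<in>edges H. f ` e \<in> E"
    using assms(1) unfolding contains_copy_def by auto
  then show ?thesis using assms(2,3) unfolding contains_copy_def by (intro exI[of _ f]) auto
qed

lemma contains_copy_clique:
  assumes "is_graph G" and "K \<subseteq> V" and "finite K" and "card K = card (verts G)" and "clique K E"
  shows "contains_copy (V, E) G"
proof -
  obtain f where f: "bij_betw f (verts G) K"
    using is_graph_finite_verts[OF assms(1)] assms(3,4) finite_same_card_bij by metis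
  have "f ` e \<in> E" if "e \<in> edges G" for e
  proof -
    obtain u v where uv: "u \<in> verts G" "v \<in> verts G" "u \<noteq> v" "e = {u, v}"
      using assms(1) \<open>e \<in> edges G\<close> unfolding is_graph_def by blast
    then have "f u \<noteq> f v" "f u \<in> K" "f v \<in> K" using f by (auto simp: bij_betw_def inj_on_def)
    then show ?thesis using assms(5) uv(4) unfolding clique_def by simp
  qed
  then show ?thesis using f assms(2) unfolding contains_copy_def bij_betw_def by auto
qed

definition complete_graph :: "nat \<Rightarrow> nat graph" where
  "complete_graph r = ({..<r}, [{..<r}]\<^bsup>2\<^esup>)"

lemma is_graph_complete_graph: "is_graph (complete_graph r)"
  by (simp add: is_graph_iff_nsets complete_graph_def)

lemma verts_complete_graph [simp]: "verts (complete_graph r) = {..<r}"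
  by (simp add: complete_graph_def)

lemma complete_graph_arrows:
  assumes "is_graph G" and "is_graph H"
  obtains r where "arrows (complete_graph r) G H"
proof -
  obtain r where r: "\<forall>(V::nat set) E. finite V \<and> card V \<ge> r \<longrightarrow>
      (\<exists>K \<subseteq> V. card K = card (verts G) \<and> clique K E \<or> card K = card (verts H) \<and> indep K E)"
    using ramsey2 by blast
  have "arrows (complete_graph r) G H"
    unfolding arrows_def verts_complete_graph
  proof (intro allI impI)
    fix R assume "R \<subseteq> edges (complete_graph r)"
    obtain K where K: "K \<subseteq> {..<r}"
      "card K = card (verts G) \<and> clique K R \<or> card K = card (verts H) \<and> indep K R"
      using r[rule_format, of "{..<r}" R] by auto
    have fin: "finite K" using K(1) finite_subset by blast
    show "contains_copy ({..<r}, R) G \<or> contains_copy ({..<r}, edges (complete_graph r) - R) H"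
      using K(2)
    proof
      assume "card K = card (verts G) \<and> clique K R"
      then show ?thesis using contains_copy_clique[OF assms(1) K(1) fin] by blast
    next
      assume indep: "card K = card (verts H) \<and> indep K R"
      then have "clique K (edges (complete_graph r) - R)"
        using K(1) unfolding clique_def indep_def complete_graph_def by auto
      then show ?thesis using contains_copy_clique[OF assms(2) K(1) fin] indep by blast
    qed
  qed
  then show ?thesis using that by blast
qed

lemma size_ramsey_le:
  fixes F :: "nat graph"
  assumes "is_graph F" and "arrows F G H"
  shows "size_ramsey G H \<le> card (edges F)"
  unfolding size_ramsey_def using assms by (intro Least_le) blast

lemma size_ramsey_attained:
  assumes "is_graph G" and "is_graph H"
  obtains F :: "nat graph" where "is_graph F" "arrows F G H" "card (edges F) = size_ramsey G H"
proof -
  let ?P = "\<lambda>m. \<exists>F :: nat graph. is_graph F \<and> card (edges F) = m \<and> arrows F G H"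
  obtain r where "arrows (complete_graph r) G H" using complete_graph_arrows[OF assms] .
  then have "?P (card (edges (complete_graph r)))" using is_graph_complete_graph by blast
  then have "?P (LEAST m. ?P m)" by (rule LeastI)
  then show ?thesis using that unfolding size_ramsey_def by blast
qed

lemma arrows_contains_copy_left:
  assumes "arrows F G H" and "contains_copy G G'"
  shows "arrows F G' H"
  unfolding arrows_def
proof (intro allI impI)
  fix R assume "R \<subseteq> edges F"
  then have "contains_copy (verts F, R) G \<or> contains_copy (verts F, edges F - R) H"
    using assms(1) unfolding arrows_def by blast
  then show "contains_copy (verts F, R) G' \<or> contains_copy (verts F, edges F - R) H"
    using contains_copy_trans[OF _ assms(2)] by blast
qed

lemma is_matching_disjoint:
  assumes "is_matching F M" and "e \<in> M" and "e' \<in> M" and "e \<noteq> e'"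
  shows "e \<inter> e' = {}"
  using assms unfolding is_matching_def by blast

lemma is_matching_mono:
  assumes "is_matching F M" and "edges F \<subseteq> edges F'"
  shows "is_matching F' M"
  using assms unfolding is_matching_def by blast

lemma is_matching_Un:
  assumes "is_matching F M1" and "is_matching F M2" and "\<And>e e'. e \<in> M1 \<Longrightarrow> e' \<in> M2 \<Longrightarrow> e \<inter> e' = {}"
  shows "is_matching F (M1 \<union> M2)"
  unfolding is_matching_def
proof (intro conjI ballI impI)
  show "M1 \<union> M2 \<subseteq> edges F" using assms(1,2) unfolding is_matching_def by auto
  fix e e' assume "e \<in> M1 \<union> M2" "e' \<in> M1 \<union> M2" "e \<noteq> e'"
  then show "e \<inter> e' = {}"
    using is_matching_disjoint[OF assms(1) _ _ \<open>e \<noteq> e'\<close>]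
      is_matching_disjoint[OF assms(2) _ _ \<open>e \<noteq> e'\<close>] assms(3)[of e e'] assms(3)[of e' e]
    by (metis Int_commute UnE)
qed

lemma finite_matchings:
  assumes "is_graph G"
  shows "finite {M. is_matching G M}"
proof -
  have "{M. is_matching G M} \<subseteq> Pow (edges G)" unfolding is_matching_def by blast
  then show ?thesis using is_graph_finite_edges[OF assms] finite_subset by blast
qed

lemma matching_number_attained:
  assumes "is_graph G"
  obtains M where "is_matching G M" "card M = matching_number G"
proof -
  have "matching_number G \<in> card ` {M. is_matching G M}"
    unfolding matching_number_def
  proof (rule Max_in)
    show "finite (card ` {M. is_matching G M})" using finite_matchings[OF assms] by (rule finite_imageI)
    have "is_matching G {}" by (simp add: is_matching_def)
    then show "card ` {M. is_matching G M} \<noteq> {}" by blast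
  qed
  then obtain M where "M \<in> {M. is_matching G M}" "matching_number G = card M" by (rule imageE)
  then show ?thesis using that by simp
qed

lemma matching_number_pos:
  assumes "is_graph G" and "edges G \<noteq> {}"
  shows "0 < matching_number G"
proof -
  obtain e where "e \<in> edges G" using assms(2) by blast
  then have "is_matching G {e}" unfolding is_matching_def by auto
  then have "card {e} \<in> card ` {M. is_matching G M}" by blast
  then have "card {e} \<le> matching_number G"
    unfolding matching_number_def using finite_matchings[OF assms(1)] by (simp add: Max_ge)
  then show ?thesis by simp
qed

lemma verts_matching_graph [simp]: "verts (matching_graph t) = {..<2 * t}"
  by (simp add: matching_graph_def)

lemma edges_matching_graph: "edges (matching_graph t) = (\<lambda>i. {2 * i, 2 * i + 1}) ` {..<t}"
  by (auto simp: matching_graph_def)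

lemma is_graph_matching_graph: "is_graph (matching_graph t)"
  unfolding is_graph_iff_nsets edges_matching_graph by auto

lemma contains_copy_matching_graph_obtains_matching:
  assumes "contains_copy F (matching_graph t)"
  obtains M where "is_matching F M" "finite M" "card M = t" "M \<subseteq> [verts F]\<^bsup>2\<^esup>"
proof -
  obtain h where inj: "inj_on h {..<2 * t}" and into: "h ` {..<2 * t} \<subseteq> verts F"
    and edge: "\<And>i. i < t \<Longrightarrow> {h (2 * i), h (2 * i + 1)} \<in> edges F"
    using assms unfolding contains_copy_def edges_matching_graph by auto
  define p where "p i = {h (2 * i), h (2 * i + 1)}" for i
  have h_eq: "h a = h b \<longleftrightarrow> a = b" if "a < 2 * t" "b < 2 * t" for a b
    using inj that by (auto dest: inj_onD)
  have disjoint: "p i \<inter> p j = {}" if "i < t" "j < t" "i \<noteq> j" for i j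
    using that unfolding p_def by (auto simp: h_eq)
  have "inj_on p {..<t}"
    using disjoint unfolding p_def inj_on_def by blast
  moreover have "p i \<in> [verts F]\<^bsup>2\<^esup>" if "i < t" for i
    using that into unfolding p_def by (auto simp: h_eq)
  moreover have "is_matching F (p ` {..<t})"
    using edge disjoint unfolding is_matching_def p_def by auto
  ultimately show ?thesis using that[of "p ` {..<t}"] by (simp add: card_image image_subset_iff)
qed

lemma matching_imp_contains_copy_matching_graph:
  assumes M: "is_matching F M" "finite M" "M \<subseteq> [verts F]\<^bsup>2\<^esup>"
  shows "contains_copy F (matching_graph (card M))"
proof -
  obtain g where g: "bij_betw g {..<card M} M"
    using ex_bij_betw_nat_finite[OF M(2)] by (auto simp: atLeast0LessThan)
  have g_in: "g i \<in> M" if "i < card M" for i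
    using g that by (auto simp: bij_betw_def)
  obtain a b where endpoints: "\<forall>e\<in>M. a e \<in> verts F \<and> b e \<in> verts F \<and> a e \<noteq> b e \<and> {a e, b e} = e"
    using nsets_2_endpoints[OF M(3)] by blast
  define h where "h k = (if even k then a (g (k div 2)) else b (g (k div 2)))" for k
  have "inj_on h {..<2 * card M}"
    unfolding h_def
  proof (rule inj_on_interleave)
    fix i j assume "i < card M" "j < card M" "i \<noteq> j"
    then have "g i \<noteq> g j" using g by (auto simp: bij_betw_def inj_on_def)
    then show "{a (g i), b (g i)} \<inter> {a (g j), b (g j)} = {}"
      using is_matching_disjoint[OF M(1)] endpoints g_in \<open>i < card M\<close> \<open>j < card M\<close> by simp
  qed (use endpoints g_in in simp)
  moreover have "h ` {..<2 * card M} \<subseteq> verts F"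
    using endpoints g_in unfolding h_def by auto
  moreover have "h ` {2 * i, 2 * i + 1} \<in> edges F" if "i < card M" for i
  proof -
    have "h ` {2 * i, 2 * i + 1} = {a (g i), b (g i)}" unfolding h_def by (simp add: insert_commute)
    also have "\<dots> = g i" using endpoints g_in that by blast
    finally show ?thesis using M(1) g_in that unfolding is_matching_def by auto
  qed
  ultimately show ?thesis
    unfolding contains_copy_def edges_matching_graph by (intro exI[of _ h]) auto
qed

lemma contains_copy_matching_graph_matching_number:
  assumes "is_graph G"
  shows "contains_copy G (matching_graph (matching_number G))"
proof -
  obtain M where M: "is_matching G M" "card M = matching_number G"
    using matching_number_attained[OF assms] .
  have "finite M" "M \<subseteq> [verts G]\<^bsup>2\<^esup>"
    using M(1) assms is_graph_finite_edges finite_subset unfolding is_matching_def is_graph_iff_nsets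
    by blast+
  then show ?thesis using matching_imp_contains_copy_matching_graph[OF M(1)] M(2) by simp
qed

definition map_graph :: "('a \<Rightarrow> 'b) \<Rightarrow> 'a graph \<Rightarrow> 'b graph" where
  "map_graph f F = (f ` verts F, (\<lambda>e. f ` e) ` edges F)"

lemma verts_map_graph [simp]: "verts (map_graph f F) = f ` verts F"
  by (simp add: map_graph_def)

lemma is_graph_map_graph:
  assumes "is_graph F" and "inj_on f (verts F)"
  shows "is_graph (map_graph f F)"
proof -
  have "(\<lambda>e. f ` e) \<in> [verts F]\<^bsup>2\<^esup> \<rightarrow> [f ` verts F]\<^bsup>2\<^esup>"
    using assms(2) by (intro nsets_image_funcset) auto
  then show ?thesis using assms(1) unfolding is_graph_iff_nsets map_graph_def by auto
qed

lemma card_edges_map_graph: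
  assumes "is_graph F" and "inj_on f (verts F)"
  shows "card (edges (map_graph f F)) = card (edges F)"
proof -
  have "inj_on (\<lambda>e. f ` e) (edges F)"
    using inj_on_nsets[OF assms(2)] assms(1) inj_on_subset unfolding is_graph_iff_nsets by blast
  then show ?thesis unfolding map_graph_def by (simp add: card_image)
qed

lemma arrows_map_graph:
  assumes "arrows F G H" and "inj_on f (verts F)"
  shows "arrows (map_graph f F) G H"
  unfolding arrows_def verts_map_graph
proof (intro allI impI)
  fix R assume "R \<subseteq> edges (map_graph f F)"
  define R' where "R' = {e \<in> edges F. f ` e \<in> R}"
  have embed: "contains_copy (f ` verts F, S') (verts F, S)" if "\<forall>e\<in>S. f ` e \<in> S'" for S S'
    using that assms(2) unfolding contains_copy_def by (intro exI[of _ f]) auto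
  have red: "contains_copy (f ` verts F, R) (verts F, R')"
    by (rule embed) (simp add: R'_def)
  have blue: "contains_copy (f ` verts F, edges (map_graph f F) - R) (verts F, edges F - R')"
    by (rule embed) (auto simp: R'_def map_graph_def)
  have "R' \<subseteq> edges F" by (simp add: R'_def)
  then have "contains_copy (verts F, R') G \<or> contains_copy (verts F, edges F - R') H"
    using assms(1) unfolding arrows_def by simp
  then show "contains_copy (f ` verts F, R) G \<or>
      contains_copy (f ` verts F, edges (map_graph f F) - R) H"
    using contains_copy_trans[OF red] contains_copy_trans[OF blue] by blast
qed

lemma arrows_matching_graph_disjoint_Un:
  assumes disjoint: "verts F1 \<inter> verts F2 = {}"
    and F1: "arrows F1 (matching_graph a) G" and F2: "arrows F2 (matching_graph b) G"
  shows "arrows (verts F1 \<union> verts F2, edges F1 \<union> edges F2) (matching_graph (a + b)) G"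
  unfolding arrows_def verts_pair edges_pair
proof (intro allI impI)
  fix R assume "R \<subseteq> edges F1 \<union> edges F2"
  define V where "V = verts F1 \<union> verts F2"
  show "contains_copy (V, R) (matching_graph (a + b)) \<or>
      contains_copy (V, edges F1 \<union> edges F2 - R) G"
  proof (rule disjCI)
    assume no_blue: "\<not> contains_copy (V, edges F1 \<union> edges F2 - R) G"
    have red: "contains_copy (verts F, R \<inter> edges F) (matching_graph c)"
      if "arrows F (matching_graph c) G" "verts F \<subseteq> V" "edges F \<subseteq> edges F1 \<union> edges F2" for F c
      using that(1)[unfolded arrows_def, rule_format, of "R \<inter> edges F"] no_blue that(2,3)
        contains_copy_mono[of "verts F" "edges F - R \<inter> edges F" G V "edges F1 \<union> edges F2 - R"]
      by auto
    obtain M1 where M1: "is_matching (verts F1, R \<inter> edges F1) M1" "finite M1" "card M1 = a"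
        "M1 \<subseteq> [verts F1]\<^bsup>2\<^esup>"
      using red[OF F1] unfolding V_def by (auto elim: contains_copy_matching_graph_obtains_matching)
    obtain M2 where M2: "is_matching (verts F2, R \<inter> edges F2) M2" "finite M2" "card M2 = b"
        "M2 \<subseteq> [verts F2]\<^bsup>2\<^esup>"
      using red[OF F2] unfolding V_def by (auto elim: contains_copy_matching_graph_obtains_matching)
    have cross: "e \<inter> e' = {}" if "e \<in> M1" "e' \<in> M2" for e e'
      using that M1(4) M2(4) disjoint unfolding nsets_def by blast
    have "M1 \<inter> M2 = {}"
      using M1(4) M2(4) nsets_disjoint[OF disjoint, of 2] by auto
    then have "card (M1 \<union> M2) = a + b" using M1(2,3) M2(2,3) by (simp add: card_Un_disjoint)
    moreover have "is_matching (V, R) (M1 \<union> M2)"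
      using is_matching_mono[OF M1(1)] is_matching_mono[OF M2(1)] cross
      by (intro is_matching_Un) auto
    moreover have "M1 \<union> M2 \<subseteq> [V]\<^bsup>2\<^esup>"
      using M1(4) M2(4) nsets_mono[of "verts F1" V] nsets_mono[of "verts F2" V] unfolding V_def by blast
    ultimately show "contains_copy (V, R) (matching_graph (a + b))"
      using matching_imp_contains_copy_matching_graph[of "(V, R)" "M1 \<union> M2"] M1(2) M2(2) by simp
  qed
qed

lemma size_ramsey_matching_graph_add:
  assumes "is_graph G"
  shows "size_ramsey (matching_graph (a + b)) G
    \<le> size_ramsey (matching_graph a) G + size_ramsey (matching_graph b) G"
proof -
  obtain F1 :: "nat graph" where F1: "is_graph F1" "arrows F1 (matching_graph a) G"
      "card (edges F1) = size_ramsey (matching_graph a) G"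
    using size_ramsey_attained[OF is_graph_matching_graph assms] .
  obtain F2 :: "nat graph" where F2: "is_graph F2" "arrows F2 (matching_graph b) G"
      "card (edges F2) = size_ramsey (matching_graph b) G"
    using size_ramsey_attained[OF is_graph_matching_graph assms] .
  obtain n where n: "verts F1 \<subseteq> {..<n}"
    using finite_nat_bounded[OF is_graph_finite_verts[OF F1(1)]] by auto
  define F2' where "F2' = map_graph ((+) n) F2"
  have F2': "is_graph F2'" "arrows F2' (matching_graph b) G" "card (edges F2') = card (edges F2)"
    unfolding F2'_def using F2
    by (simp_all add: is_graph_map_graph arrows_map_graph card_edges_map_graph)
  have disjoint: "verts F1 \<inter> verts F2' = {}"
    using n unfolding F2'_def by auto
  define F where "F = (verts F1 \<union> verts F2', edges F1 \<union> edges F2')"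
  have E1: "edges F1 \<subseteq> [verts F1]\<^bsup>2\<^esup>" and E2: "edges F2' \<subseteq> [verts F2']\<^bsup>2\<^esup>"
    using F1(1) F2'(1) unfolding is_graph_iff_nsets by blast+
  have "edges F1 \<inter> edges F2' = {}"
    using E1 E2 nsets_disjoint[OF disjoint, of 2] by auto
  then have card_F: "card (edges F) = card (edges F1) + card (edges F2')"
    unfolding F_def using F1(1) F2'(1) by (simp add: card_Un_disjoint is_graph_finite_edges)
  have "edges F1 \<union> edges F2' \<subseteq> [verts F1 \<union> verts F2']\<^bsup>2\<^esup>"
    using E1 E2 nsets_mono[of "verts F1" "verts F1 \<union> verts F2'" 2]
      nsets_mono[of "verts F2'" "verts F1 \<union> verts F2'" 2] by auto
  then have "is_graph F"
    using is_graph_finite_verts[OF F1(1)] is_graph_finite_verts[OF F2'(1)]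
    unfolding F_def is_graph_iff_nsets by simp
  moreover have "arrows F (matching_graph (a + b)) G"
    unfolding F_def using disjoint F1(2) F2'(2) by (rule arrows_matching_graph_disjoint_Un)
  ultimately have "size_ramsey (matching_graph (a + b)) G \<le> card (edges F)"
    by (rule size_ramsey_le)
  then show ?thesis using card_F F1(3) F2(3) F2'(3) by simp
qed

lemma size_ramsey_matching_graph_0: "size_ramsey (matching_graph 0) G = 0"
proof -
  have "arrows ({}, {}) (matching_graph 0) G"
    unfolding arrows_def contains_copy_def edges_matching_graph by simp
  then show ?thesis using size_ramsey_le[of "({}, {})"] by (simp add: is_graph_def)
qed

lemma size_ramsey_matching_graph_mult:
  assumes "is_graph G"
  shows "size_ramsey (matching_graph (k * t)) G \<le> k * size_ramsey (matching_graph t) G"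
proof (induction k)
  case 0
  then show ?case by (simp add: size_ramsey_matching_graph_0)
next
  case (Suc k)
  then show ?case using size_ramsey_matching_graph_add[OF assms, of t "k * t"] by simp
qed

lemma size_ramsey_matching_number_le:
  assumes "is_graph G"
  shows "size_ramsey (matching_graph (matching_number G)) G \<le> size_ramsey G G"
proof -
  obtain F :: "nat graph" where "is_graph F" "arrows F G G" "card (edges F) = size_ramsey G G"
    using size_ramsey_attained[OF assms assms] .
  then show ?thesis
    using size_ramsey_le arrows_contains_copy_left contains_copy_matching_graph_matching_number[OF assms]
    by metis
qed

lemma size_ramsey_matching_graph_ratio_mult_le:
  fixes c :: real
  assumes "is_graph G" and "0 < k" and "0 \<le> c"
  shows "real (size_ramsey (matching_graph (k * t)) G) / (real (k * t) * c)
    \<le> real (size_ramsey (matching_graph t) G) / (real t * c)"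
proof -
  have "real (size_ramsey (matching_graph (k * t)) G) \<le> real k * real (size_ramsey (matching_graph t) G)"
    using size_ramsey_matching_graph_mult[OF assms(1)] by (metis of_nat_le_iff of_nat_mult)
  then have "real (size_ramsey (matching_graph (k * t)) G) / (real (k * t) * c)
      \<le> real k * real (size_ramsey (matching_graph t) G) / (real (k * t) * c)"
    by (rule divide_right_mono) (use assms(3) in simp_all)
  also have "\<dots> = real (size_ramsey (matching_graph t) G) / (real t * c)"
    using assms(2) by (simp add: mult.assoc)
  finally show ?thesis .
qed

lemma size_ramsey_infty_le:
  assumes "convergent (\<lambda>t. real (size_ramsey (matching_graph t) G) / (real t * real (card (edges G))))"
    and "is_graph G" and "0 < t"
  shows "size_ramsey_infty G \<le> real (size_ramsey (matching_graph t) G) / (real t * real (card (edges G)))"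
  unfolding size_ramsey_infty_def
proof (rule lim_le_of_subseq_le[OF assms(1)])
  show "strict_mono (\<lambda>k. Suc k * t)"
    using assms(3) by (auto simp: strict_mono_def)
qed (rule size_ramsey_matching_graph_ratio_mult_le[OF assms(2)], simp_all)

theorem proposition4p1:
  fixes G :: "'a graph"
  assumes "is_graph G" and "edges G \<noteq> {}"
  shows "size_ramsey (matching_graph (matching_number G)) G \<le> size_ramsey G G
    \<and> (convergent (\<lambda>t. real (size_ramsey (matching_graph t) G) / (real t * real (card (edges G))))
       \<longrightarrow> size_ramsey_infty G \<le> real (size_ramsey G G) / (real (matching_number G) * real (card (edges G))))"
proof (intro conjI impI)
  show \<nu>_bound: "size_ramsey (matching_graph (matching_number G)) G \<le> size_ramsey G G"
    using assms(1) by (rule size_ramsey_matching_number_le)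
  assume "convergent (\<lambda>t. real (size_ramsey (matching_graph t) G) / (real t * real (card (edges G))))"
  then have "size_ramsey_infty G \<le> real (size_ramsey (matching_graph (matching_number G)) G)
      / (real (matching_number G) * real (card (edges G)))"
    using assms(1) matching_number_pos[OF assms] by (rule size_ramsey_infty_le)
  also have "\<dots> \<le> real (size_ramsey G G) / (real (matching_number G) * real (card (edges G)))"
    using \<nu>_bound by (simp add: divide_right_mono)
  finally show "size_ramsey_infty G
      \<le> real (size_ramsey G G) / (real (matching_number G) * real (card (edges G)))" .
qed

end
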